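(* Let $G$ be a simple loopless graph on $[L]$ and $p\ge1$. For every $(\pi,\phi)\in\Pi_{2p}(G)$, one has $\Phi_p(\pi,\phi)\in\mathcal{P}_{2p}(G)$.
   Context: $\mathcal{T}(G)=\langle v\in[L]: uv=vu \text{ for } (u,v)\in E(G)\rangle$ is the trace monoid of $G$, $e$ the empty word. Words $w_1,w_2\in\mathcal{T}(G)$ are adjacent, $w_1\leftrightarrow w_2$, if $w_1=vw_2$ or $w_2=vw_1$ for some letter $v\in[L]$. $\mathcal{P}_{2p}(G)=\{w\in\mathcal{T}(G)^{2p}: e\leftrightarrow w_1\leftrightarrow w_2\leftrightarrow\cdots\leftrightarrow w_{2p}=e\}$ (closed paths of length $2p$ from $e$ in the Cayley graph of $\mathcal{T}(G)$). $P_2(2p)$ is the set of pair partitions of $[2p]$; blocks $\{u_1,v_1\},\{u_2,v_2\}$ cross if $u_1<u_2<v_1<v_2$; $F_\pi$ is the graph on the blocks of $\pi$ with edges between crossing blocks. $\Pi_{2p}(G)=\{(\pi,\phi):\pi\in P_2(2p),\ \phi\in\operatorname{Hom}(F_\pi,G)\}$. Definition of $\Phi_p:\Pi_{2p}(G)\to\mathcal{T}(G)^{2p}$: (1) For $p=1$, if $\phi$ assigns label $i$ to the unique block $\{1,2\}$, $\Phi_1(\pi,\phi)=(i,e)$. (2) Given $\Phi_p$ and $(\pi,\phi)\in\Pi_{2(p+1)}(G)$, let $r$ be the smallest index that is the larger element of its block, $U=\{s,r\}\in\pi$ with $s<r$, $i_s=\phi(U)$, $\sigma=\pi\setminus\{U\}$,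 $\psi=\phi|_\sigma$. Identify $P_2([2(p+1)]\setminus\{s,r\})$ with $P_2(2p)$ via the order-preserving bijection, and write $u=\Phi_p(\sigma,\psi)=(u_k)_{k\in[2(p+1)]\setminus\{s,r\}}$; let $u_{k^-}$ be $u_j$ for the largest $j<k$, $j\notin\{s,r\}$, or $e$ if none exists. Then $\Phi_{p+1}(\pi,\phi)_k=u_k$ for $k<s$; $i_su_{s^-}$ for $k=s$; $i_su_k$ for $s<k<r$; $u_{r^-}$ for $k=r$; $u_k$ for $k>r$. *)

theory Defs
  imports Main
begin

definition simple_graph :: "nat \<Rightarrow> (nat \<Rightarrow> nat \<Rightarrow> bool) \<Rightarrow> bool" where
  "simple_graph L E \<longleftrightarrow>
     (\<forall>u v. E u v \<longrightarrow> u \<in> {1..L} \<and> v \<in> {1..L}) \<and>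
     (\<forall>u v. E u v \<longrightarrow> E v u) \<and> (\<forall>u. \<not> E u u)"

text \<open>Trace monoid T(G): words over [L] (lists) modulo the congruence generated by
uv = vu for edges (u,v) of G. Elements of T(G) are represented by words; equality in
T(G) is trace_eq.\<close>

inductive trace_step :: "(nat \<Rightarrow> nat \<Rightarrow> bool) \<Rightarrow> nat list \<Rightarrow> nat list \<Rightarrow> bool"
  for E where
  "E u v \<Longrightarrow> trace_step E (xs @ [u, v] @ ys) (xs @ [v, u] @ ys)"

definition trace_eq :: "(nat \<Rightarrow> nat \<Rightarrow> bool) \<Rightarrow> nat list \<Rightarrow> nat list \<Rightarrow> bool" where
  "trace_eq E = equivclp (trace_step E)"

definition is_word :: "nat \<Rightarrow> nat list \<Rightarrow> bool" where
  "is_word L w \<longleftrightarrow> set w \<subseteq> {1..L}"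

definition trace_adj :: "nat \<Rightarrow> (nat \<Rightarrow> nat \<Rightarrow> bool) \<Rightarrow> nat list \<Rightarrow> nat list \<Rightarrow> bool" where
  "trace_adj L E w1 w2 \<longleftrightarrow>
     (\<exists>v\<in>{1..L}. trace_eq E w1 (v # w2) \<or> trace_eq E w2 (v # w1))"

definition closed_paths :: "nat \<Rightarrow> (nat \<Rightarrow> nat \<Rightarrow> bool) \<Rightarrow> nat \<Rightarrow> (nat \<Rightarrow> nat list) \<Rightarrow> bool" where
  "closed_paths L E p w \<longleftrightarrow>
     (\<forall>k\<in>{1..2*p}. is_word L (w k)) \<and>
     trace_adj L E [] (w 1) \<and>
     (\<forall>k. 1 \<le> k \<and> k < 2*p \<longrightarrow> trace_adj L E (w k) (w (Suc k))) \<and>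
     trace_eq E (w (2*p)) []"

definition pair_partition :: "nat \<Rightarrow> nat set set \<Rightarrow> bool" where
  "pair_partition p \<pi> \<longleftrightarrow>
     \<Union>\<pi> = {1..2*p} \<and> (\<forall>U\<in>\<pi>. card U = 2) \<and>
     (\<forall>U\<in>\<pi>. \<forall>V\<in>\<pi>. U \<noteq> V \<longrightarrow> U \<inter> V = {})"

definition crosses :: "nat set \<Rightarrow> nat set \<Rightarrow> bool" where
  "crosses U V \<longleftrightarrow> Min U < Min V \<and> Min V < Max U \<and> Max U < Max V"

definition graph_hom :: "nat \<Rightarrow> (nat \<Rightarrow> nat \<Rightarrow> bool) \<Rightarrow> nat set set \<Rightarrow> (nat set \<Rightarrow> nat) \<Rightarrow> bool" where
  "graph_hom L E \<pi> \<phi> \<longleftrightarrow>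
     (\<forall>U\<in>\<pi>. \<phi> U \<in> {1..L}) \<and>
     (\<forall>U\<in>\<pi>. \<forall>V\<in>\<pi>. crosses U V \<or> crosses V U \<longrightarrow> E (\<phi> U) (\<phi> V))"

definition Pi_set :: "nat \<Rightarrow> (nat \<Rightarrow> nat \<Rightarrow> bool) \<Rightarrow> nat \<Rightarrow> nat set set \<Rightarrow> (nat set \<Rightarrow> nat) \<Rightarrow> bool" where
  "Pi_set L E p \<pi> \<phi> \<longleftrightarrow> pair_partition p \<pi> \<and> graph_hom L E \<pi> \<phi>"

text \<open>The identification of P_2([2(p+1)] - {s,r}) with P_2(2p) via the
order-preserving bijection is realised by defining Phi on pair partitions of an
arbitrary finite index set (the positions keep their original indices); the tuple
is a function from indices to words. Phi p pi phi is meant for partitions with p blocks.\<close>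

definition prev_val :: "nat set \<Rightarrow> (nat \<Rightarrow> nat list) \<Rightarrow> nat \<Rightarrow> nat list" where
  "prev_val S u k = (if \<exists>j\<in>S. j < k then u (Max {j\<in>S. j < k}) else [])"

fun Phi :: "nat \<Rightarrow> nat set set \<Rightarrow> (nat set \<Rightarrow> nat) \<Rightarrow> nat \<Rightarrow> nat list" where
  "Phi 0 \<pi> \<phi> = (\<lambda>k. [])"
| "Phi (Suc 0) \<pi> \<phi> =
     (let U = (THE U. U \<in> \<pi>) in (\<lambda>k. if k = Min U then [\<phi> U] else []))"
| "Phi (Suc (Suc n)) \<pi> \<phi> =
     (let r = Min (Max ` \<pi>);
          U = (THE U. U \<in> \<pi> \<and> Max U = r);
          s = Min U;
          i = \<phi> U;
          \<sigma> = \<pi> - {U};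
          u = Phi (Suc n) \<sigma> \<phi>;
          S = \<Union>\<sigma>
      in (\<lambda>k. if k < s then u k
              else if k = s then i # prev_val S u s
              else if k < r then i # u k
              else if k = r then prev_val S u r
              else u k))"

end

theory Submission
  imports Defs
begin

(* For pair blocks on an
   arbitrary finite set of positions, the invariant block_walk says that, up to trace
   equivalence, the walk multiplies the word at the previous position on the left by phi V at
   the opener of each block V, cancels phi V again at its closer, and ends at the empty word.
   Remove the block U = {s, r} whose closer r is smallest. Every remaining position strictly
   between s and r must then be the opener of a block closing after r, i.e. of a block crossing
   U, so its label commutes with i = phi U. This is exactly what keeps the invariant intact when
   Phi prefixes the words strictly between s and r with i. *)

lemma trace_eq_trans [trans]: "trace_eq E x y \<Longrightarrow> trace_eq E y z \<Longrightarrow> trace_eq E x z"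
  unfolding trace_eq_def by (rule equivclp_trans)

lemma trace_step_Cons: "trace_step E x y \<Longrightarrow> trace_step E (a # x) (a # y)"
  by (induction rule: trace_step.induct) (metis append_Cons trace_step.intros)

lemma trace_eq_Cons: "trace_eq E x y \<Longrightarrow> trace_eq E (a # x) (a # y)"
  unfolding trace_eq_def
proof (induction rule: equivclp_induct)
  case (step y z)
  then show ?case
    by (meson trace_step_Cons equivclp_into_equivclp)
qed simp

lemma trace_eq_swap: "E u v \<Longrightarrow> trace_eq E (u # v # x) (v # u # x)"
  unfolding trace_eq_def using trace_step.intros[of E u v "[]" x] by auto

lemma trace_eq_Cons_swap:
  assumes "E i a" "trace_eq E w (a # x)"
  shows "trace_eq E (i # w) (a # i # x)"
proof -
  have "trace_eq E (i # w) (i # a # x)" using assms(2) by (rule trace_eq_Cons)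
  also have "trace_eq E \<dots> (a # i # x)" using assms(1) by (rule trace_eq_swap)
  finally show ?thesis .
qed

lemma prev_val_eqI:
  assumes "m \<in> S" "m < k" "\<forall>j\<in>S. j < k \<longrightarrow> j \<le> m"
  shows "prev_val S u k = u m"
proof -
  have "finite {j\<in>S. j < k}" by simp
  then have "Max {j\<in>S. j < k} = m" using assms by (intro Max_eqI) auto
  then show ?thesis using assms unfolding prev_val_def by auto
qed

lemma prev_val_empty: "\<forall>j\<in>S. k \<le> j \<Longrightarrow> prev_val S u k = []"
  unfolding prev_val_def by auto

lemma prev_val_cases:
  obtains "\<forall>j\<in>S. k \<le> j" "\<And>u. prev_val S u k = []"
  | m where "m \<in> S" "m < k" "\<forall>j\<in>S. j < k \<longrightarrow> j \<le> m" "\<And>u. prev_val S u k = u m"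
proof (cases "\<exists>j\<in>S. j < k")
  case True
  let ?m = "Max {j\<in>S. j < k}"
  have "?m \<in> {j\<in>S. j < k}" using True by (intro Max_in) auto
  moreover have "\<forall>j\<in>S. j < k \<longrightarrow> j \<le> ?m" by auto
  ultimately show ?thesis
    using that(2)[of ?m] prev_val_eqI[of ?m S k] by blast
next
  case False
  then show ?thesis using that(1) prev_val_empty[of S k] by (simp add: not_less)
qed

lemma prev_val_gap:
  assumes "k' \<le> k" "\<forall>j\<in>S. k' \<le> j \<longrightarrow> k \<le> j"
  shows "prev_val S u k = prev_val S u k'"
proof -
  have "{j\<in>S. j < k} = {j\<in>S. j < k'}" using assms by (auto simp: not_less[symmetric])
  then show ?thesis unfolding prev_val_def by (metis (no_types, lifting) mem_Collect_eq)
qed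

lemma is_word_prev_val: "\<forall>j\<in>S. is_word L (u j) \<Longrightarrow> is_word L (prev_val S u k)"
  by (cases rule: prev_val_cases[of S k]) (auto simp: is_word_def)

lemma prev_val_insert:
  "prev_val (insert a S) u k =
    (if a < k \<and> (\<forall>j\<in>S. j < k \<longrightarrow> j < a) then u a else prev_val S u k)"
proof (cases rule: prev_val_cases[of S k])
  case 1
  then show ?thesis
    by (auto intro!: prev_val_eqI prev_val_empty simp: not_less)
next
  case (2 m)
  then show ?thesis
    by (auto intro!: prev_val_eqI simp: not_less)
qed

definition pair_blocks :: "nat set set \<Rightarrow> bool" where
  "pair_blocks \<pi> \<longleftrightarrow> finite \<pi> \<and> (\<forall>U\<in>\<pi>. card U = 2) \<and> pairwise disjnt \<pi>"

lemma pair_blocks_block: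
  assumes "pair_blocks \<pi>" "V \<in> \<pi>"
  shows "V = {Min V, Max V}" "Min V < Max V"
proof -
  obtain x y where "V = {x, y}" "x \<noteq> y"
    using assms unfolding pair_blocks_def card_2_iff by blast
  then show "V = {Min V, Max V}" "Min V < Max V"
    by (cases "x < y"; auto simp: insert_commute)+
qed

lemma pair_blocks_eqI:
  assumes "pair_blocks \<pi>" "U \<in> \<pi>" "V \<in> \<pi>" "x \<in> U" "x \<in> V"
  shows "U = V"
  using assms unfolding pair_blocks_def pairwise_def disjnt_def by blast

lemma pair_blocks_Max_in: "pair_blocks \<pi> \<Longrightarrow> V \<in> \<pi> \<Longrightarrow> Max V \<in> V"
  by (metis insertI1 insert_commute pair_blocks_block(1))

lemma pair_blocks_Min_in: "pair_blocks \<pi> \<Longrightarrow> V \<in> \<pi> \<Longrightarrow> Min V \<in> V"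
  by (metis insertI1 pair_blocks_block(1))

lemma pair_blocks_Diff: "pair_blocks \<pi> \<Longrightarrow> pair_blocks (\<pi> - A)"
  unfolding pair_blocks_def by (auto intro: pairwise_subset)

lemma pair_blocks_the_Max:
  assumes "pair_blocks \<pi>" "U \<in> \<pi>"
  shows "(THE V. V \<in> \<pi> \<and> Max V = Max U) = U"
  using assms pair_blocks_eqI pair_blocks_Max_in by (intro the_equality) metis+

definition block_walk ::
    "nat \<Rightarrow> (nat \<Rightarrow> nat \<Rightarrow> bool) \<Rightarrow> nat set set \<Rightarrow> (nat set \<Rightarrow> nat) \<Rightarrow> (nat \<Rightarrow> nat list) \<Rightarrow> bool" where
  "block_walk L E \<pi> \<phi> w \<longleftrightarrow>
     (\<forall>k\<in>\<Union>\<pi>. is_word L (w k)) \<and>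
     (\<forall>V\<in>\<pi>. trace_eq E (w (Min V)) (\<phi> V # prev_val (\<Union>\<pi>) w (Min V)) \<and>
             trace_eq E (prev_val (\<Union>\<pi>) w (Max V)) (\<phi> V # w (Max V))) \<and>
     (\<forall>k. (\<forall>j\<in>\<Union>\<pi>. j < k) \<longrightarrow> trace_eq E (prev_val (\<Union>\<pi>) w k) [])"

lemma block_walk_singleton:
  assumes "pair_blocks {U}" "\<phi> U \<in> {1..L}"
  shows "block_walk L E {U} \<phi> (Phi (Suc 0) {U} \<phi>)"
proof -
  obtain s r where U: "U = {s, r}" "s < r"
    using pair_blocks_block[OF assms(1)] by blast
  have "prev_val {s, r} u k = (if r < k then u r else if s < k then u s else [])" for u k
    using U(2) by (simp add: prev_val_insert prev_val_empty)
  then show ?thesis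
    using U assms(2) unfolding block_walk_def trace_eq_def by (auto simp: is_word_def)
qed

definition Phi_step ::
    "nat set \<Rightarrow> nat \<Rightarrow> nat \<Rightarrow> nat \<Rightarrow> (nat \<Rightarrow> nat list) \<Rightarrow> nat \<Rightarrow> nat list" where
  "Phi_step S s r i u = (\<lambda>k. if k < s then u k
              else if k = s then i # prev_val S u s
              else if k < r then i # u k
              else if k = r then prev_val S u r
              else u k)"

context
  fixes S :: "nat set" and s r :: nat
  assumes s_less_r: "s < r" and s_notin: "s \<notin> S" and r_notin: "r \<notin> S"
begin

lemma Phi_step_in:
  "k \<in> S \<Longrightarrow> Phi_step S s r i u k = (if s < k \<and> k < r then i # u k else u k)"
  using s_notin r_notin by (auto simp: Phi_step_def)

(* The hypotheses say that neither s nor r is the predecessor of k in insert s (insert r S). *)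
lemma prev_val_Phi_step_in:
  assumes "\<not> (s < k \<and> (\<forall>j\<in>S. j < k \<longrightarrow> j < s))" "\<not> (r < k \<and> (\<forall>j\<in>S. j < k \<longrightarrow> j < r))"
  shows "prev_val S (Phi_step S s r i u) k =
    (if s < k \<and> k \<le> r then i # prev_val S u k else prev_val S u k)"
proof (cases rule: prev_val_cases[of S k])
  case 1
  then show ?thesis using assms by (auto simp: not_less)
next
  case (2 m)
  have "s < m \<and> m < r \<longleftrightarrow> s < k \<and> k \<le> r"
  proof
    assume "s < m \<and> m < r"
    then show "s < k \<and> k \<le> r" using 2 assms(2) by force
  next
    assume k: "s < k \<and> k \<le> r"
    then obtain j where "j \<in> S" "j < k" "s \<le> j" using assms(1) by (auto simp: not_less)
    then show "s < m \<and> m < r"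
      using 2 k s_notin by (metis le_neq_implies_less order.strict_trans2)
  qed
  then show ?thesis using 2 Phi_step_in by auto
qed

lemma prev_val_Phi_step:
  "prev_val (insert s (insert r S)) (Phi_step S s r i u) k =
    (if s < k \<and> k \<le> r then i # prev_val S u k else prev_val S u k)"
proof -
  let ?W = "Phi_step S s r i u"
  have W_s: "?W s = i # prev_val S u k" if "s < k" "\<forall>j\<in>S. j < k \<longrightarrow> j < s"
  proof -
    have "prev_val S u k = prev_val S u s"
      using that by (intro prev_val_gap) (auto simp: not_less[symmetric])
    then show ?thesis by (simp add: Phi_step_def)
  qed
  have W_r: "?W r = prev_val S u k" if "r < k" "\<forall>j\<in>S. j < k \<longrightarrow> j < r"
  proof -
    have "prev_val S u k = prev_val S u r"
      using that by (intro prev_val_gap) (auto simp: not_less[symmetric])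
    then show ?thesis using s_less_r by (simp add: Phi_step_def)
  qed
  show ?thesis
    using s_less_r W_s W_r prev_val_Phi_step_in by (auto simp: prev_val_insert)
qed

lemma is_word_Phi_step:
  assumes "i \<in> {1..L}" "\<forall>j\<in>S. is_word L (u j)" "k \<in> insert s (insert r S)"
  shows "is_word L (Phi_step S s r i u k)"
  using assms s_less_r is_word_prev_val[OF assms(2)] Phi_step_in[of k]
  by (auto simp: Phi_step_def is_word_def)

lemma Phi_step_new_block:
  "Phi_step S s r i u s = i # prev_val (insert s (insert r S)) (Phi_step S s r i u) s"
  "prev_val (insert s (insert r S)) (Phi_step S s r i u) r = i # Phi_step S s r i u r"
  using s_less_r unfolding prev_val_Phi_step by (simp_all add: Phi_step_def)

lemma Phi_step_opener:
  assumes "c \<in> S" "s < c \<and> c < r \<Longrightarrow> E i a" "trace_eq E (u c) (a # prev_val S u c)"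
  shows "trace_eq E (Phi_step S s r i u c) (a # prev_val (insert s (insert r S)) (Phi_step S s r i u) c)"
proof (cases "s < c \<and> c < r")
  case True
  then show ?thesis
    using assms trace_eq_Cons_swap by (simp add: Phi_step_in prev_val_Phi_step)
next
  case False
  then show ?thesis
    using assms r_notin by (auto simp: Phi_step_in prev_val_Phi_step)
qed

lemma Phi_step_closer:
  assumes "d \<in> S" "r < d" "trace_eq E (prev_val S u d) (a # u d)"
  shows "trace_eq E (prev_val (insert s (insert r S)) (Phi_step S s r i u) d) (a # Phi_step S s r i u d)"
  using assms s_less_r by (simp add: Phi_step_in prev_val_Phi_step)

end

lemma pair_blocks_Union_Diff:
  assumes "pair_blocks \<pi>" "U \<in> \<pi>"
  shows "\<Union>\<pi> = insert (Min U) (insert (Max U) (\<Union>(\<pi> - {U})))"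
    and "Min U \<notin> \<Union>(\<pi> - {U})" "Max U \<notin> \<Union>(\<pi> - {U})"
  using pair_blocks_block(1)[OF assms] pair_blocks_eqI[OF assms(1)] assms(2) by blast+

lemma block_walk_Phi_step:
  assumes pb: "pair_blocks \<pi>" and U: "U \<in> \<pi>" and first: "\<forall>V\<in>\<pi>. Max U \<le> Max V"
    and hom: "graph_hom L E \<pi> \<phi>" and walk: "block_walk L E (\<pi> - {U}) \<phi> u"
  shows "block_walk L E \<pi> \<phi> (Phi_step (\<Union>(\<pi> - {U})) (Min U) (Max U) (\<phi> U) u)"
proof -
  define S s r i where "S = \<Union>(\<pi> - {U})" and "s = Min U" and "r = Max U" and "i = \<phi> U"
  define W where "W = Phi_step S s r i u"
  have sr: "s < r" using pair_blocks_block(2)[OF pb U] unfolding s_def r_def .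
  note T = pair_blocks_Union_Diff[OF pb U, folded S_def s_def r_def]
  have u_walk: "\<forall>k\<in>S. is_word L (u k)"
    "\<And>V. V \<in> \<pi> - {U} \<Longrightarrow> trace_eq E (u (Min V)) (\<phi> V # prev_val S u (Min V))"
    "\<And>V. V \<in> \<pi> - {U} \<Longrightarrow> trace_eq E (prev_val S u (Max V)) (\<phi> V # u (Max V))"
    "\<And>k. \<forall>j\<in>S. j < k \<Longrightarrow> trace_eq E (prev_val S u k) []"
    using walk unfolding block_walk_def S_def by blast+
  have words: "\<forall>k\<in>\<Union>\<pi>. is_word L (W k)"
    using hom U is_word_Phi_step[OF sr T(2,3) _ u_walk(1)] unfolding T(1) W_def i_def graph_hom_def
    by blast
  have steps: "trace_eq E (W (Min V)) (\<phi> V # prev_val (\<Union>\<pi>) W (Min V)) \<and>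
      trace_eq E (prev_val (\<Union>\<pi>) W (Max V)) (\<phi> V # W (Max V))" if V: "V \<in> \<pi>" for V
  proof (cases "V = U")
    case True
    then show ?thesis
      using Phi_step_new_block[OF sr T(2,3)] unfolding T(1) W_def s_def r_def i_def
      by (simp add: trace_eq_def)
  next
    case False
    then have V': "V \<in> \<pi> - {U}" using V by blast
    then have in_S: "Min V \<in> S" "Max V \<in> S"
      using pair_blocks_Min_in[OF pb] pair_blocks_Max_in[OF pb] unfolding S_def by blast+
    have "r < Max V" using first V in_S(2) T(3) unfolding r_def by (metis order_le_neq_trans)
    then have "E i (\<phi> V)" if "s < Min V \<and> Min V < r"
      using that hom U V unfolding graph_hom_def crosses_def s_def r_def i_def by blast
    then show ?thesis
      using Phi_step_opener[OF sr T(2,3) in_S(1) _ u_walk(2)[OF V']]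
        Phi_step_closer[OF sr T(2,3) in_S(2) \<open>r < Max V\<close> u_walk(3)[OF V']]
      unfolding T(1) W_def by blast
  qed
  have return: "trace_eq E (prev_val (\<Union>\<pi>) W k) []" if "\<forall>j\<in>\<Union>\<pi>. j < k" for k
  proof -
    have "r < k" "\<forall>j\<in>S. j < k" using that unfolding T(1) by auto
    then show ?thesis
      using u_walk(4)[of k] unfolding T(1) W_def by (simp add: prev_val_Phi_step[OF sr T(2,3)])
  qed
  show ?thesis
    unfolding block_walk_def W_def[symmetric] S_def[symmetric] s_def[symmetric] r_def[symmetric]
      i_def[symmetric]
    using words steps return by blast
qed

lemma Phi_Suc_Suc_eq:
  assumes "pair_blocks \<pi>" "U \<in> \<pi>" "Max U = Min (Max ` \<pi>)"
  shows "Phi (Suc (Suc n)) \<pi> \<phi> =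
    Phi_step (\<Union>(\<pi> - {U})) (Min U) (Max U) (\<phi> U) (Phi (Suc n) (\<pi> - {U}) \<phi>)"
  by (simp only: Phi.simps Let_def Phi_step_def assms(3)[symmetric]
      pair_blocks_the_Max[OF assms(1,2)])

lemma graph_hom_subset: "graph_hom L E \<pi> \<phi> \<Longrightarrow> \<sigma> \<subseteq> \<pi> \<Longrightarrow> graph_hom L E \<sigma> \<phi>"
  unfolding graph_hom_def by blast

lemma block_walk_Phi:
  assumes "pair_blocks \<pi>" "card \<pi> = Suc n" "graph_hom L E \<pi> \<phi>"
  shows "block_walk L E \<pi> \<phi> (Phi (Suc n) \<pi> \<phi>)"
  using assms
proof (induction n arbitrary: \<pi>)
  case 0
  then obtain U where "\<pi> = {U}" by (auto simp: card_Suc_eq)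
  then show ?case using 0 block_walk_singleton unfolding graph_hom_def by blast
next
  case (Suc n)
  have "Min (Max ` \<pi>) \<in> Max ` \<pi>"
    using Suc.prems(1,2) unfolding pair_blocks_def by (intro Min_in) auto
  then obtain U where U: "U \<in> \<pi>" "Max U = Min (Max ` \<pi>)" by auto
  have first: "\<forall>V\<in>\<pi>. Max U \<le> Max V"
    using Suc.prems(1) U(2) unfolding pair_blocks_def by simp
  have "block_walk L E (\<pi> - {U}) \<phi> (Phi (Suc n) (\<pi> - {U}) \<phi>)"
    using Suc.prems U(1) pair_blocks_Diff graph_hom_subset
    by (intro Suc.IH) (auto simp: pair_blocks_def)
  then show ?case
    unfolding Phi_Suc_Suc_eq[OF Suc.prems(1) U]
    by (rule block_walk_Phi_step[OF Suc.prems(1) U(1) first Suc.prems(3)])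
qed

lemma pair_partition_pair_blocks:
  assumes "pair_partition p \<pi>"
  shows "pair_blocks \<pi>" "card \<pi> = p"
proof -
  have blocks: "\<Union>\<pi> = {1..2*p}" "\<forall>U\<in>\<pi>. card U = 2" "pairwise disjnt \<pi>"
    using assms unfolding pair_partition_def pairwise_def disjnt_def by auto
  have fin_blocks: "finite U" if "U \<in> \<pi>" for U
    using blocks(2) that card.infinite by fastforce
  have "finite \<pi>" by (rule finite_UnionD) (simp add: blocks(1))
  then show "pair_blocks \<pi>" using blocks unfolding pair_blocks_def by blast
  have "2 * p = card (\<Union>\<pi>)" using blocks(1) by simp
  also have "\<dots> = (\<Sum>U\<in>\<pi>. card U)" using blocks(3) fin_blocks by (rule card_Union_disjoint)
  also have "\<dots> = 2 * card \<pi>" using blocks(2) by simp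
  finally show "card \<pi> = p" by simp
qed

lemma block_walk_trace_adj:
  assumes "block_walk L E \<pi> \<phi> w" "pair_blocks \<pi>" "\<forall>V\<in>\<pi>. \<phi> V \<in> {1..L}" "k \<in> \<Union>\<pi>"
  shows "trace_adj L E (prev_val (\<Union>\<pi>) w k) (w k)"
proof -
  obtain V where V: "V \<in> \<pi>" "k \<in> V" using assms(4) by blast
  then have "k = Min V \<or> k = Max V" using pair_blocks_block(1)[OF assms(2)] by blast
  then show ?thesis
    using assms(1,3) V(1) unfolding block_walk_def trace_adj_def by blast
qed

lemma block_walk_closed_paths:
  assumes "block_walk L E \<pi> \<phi> w" "pair_blocks \<pi>" "\<forall>V\<in>\<pi>. \<phi> V \<in> {1..L}"
    and "\<Union>\<pi> = {1..2*p}" "1 \<le> p"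
  shows "closed_paths L E p w"
proof -
  have adj: "trace_adj L E (prev_val {1..2*p} w k) (w k)" if "k \<in> {1..2*p}" for k
    using block_walk_trace_adj[OF assms(1-3)] that assms(4) by simp
  have "prev_val {1..2*p} w 1 = []" by (simp add: prev_val_empty)
  then have start: "trace_adj L E [] (w 1)" using adj[of 1] assms(5) by simp
  have "prev_val {1..2*p} w (Suc k) = w k" if "1 \<le> k" "k \<le> 2*p" for k
    using that by (intro prev_val_eqI) auto
  then have path: "trace_adj L E (w k) (w (Suc k))" if "1 \<le> k" "k < 2*p" for k
    using that adj[of "Suc k"] by simp
  have "trace_eq E (prev_val {1..2*p} w (Suc (2*p))) []"
    using assms(1,4) unfolding block_walk_def by auto
  moreover have "prev_val {1..2*p} w (Suc (2*p)) = w (2*p)"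
    using assms(5) by (intro prev_val_eqI) auto
  ultimately have return: "trace_eq E (w (2*p)) []" by simp
  have "\<forall>k\<in>{1..2*p}. is_word L (w k)"
    using assms(1,4) unfolding block_walk_def by simp
  then show ?thesis unfolding closed_paths_def using start path return by blast
qed

theorem lemma3p2:
  fixes L p :: nat and E :: "nat \<Rightarrow> nat \<Rightarrow> bool"
    and \<pi> :: "nat set set" and \<phi> :: "nat set \<Rightarrow> nat"
  assumes "simple_graph L E"
    and "p \<ge> 1"
    and "Pi_set L E p \<pi> \<phi>"
  shows "closed_paths L E p (Phi p \<pi> \<phi>)"
proof -
  have partition: "pair_partition p \<pi>" and hom: "graph_hom L E \<pi> \<phi>"
    using assms(3) unfolding Pi_set_def by auto
  note blocks = pair_partition_pair_blocks[OF partition]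
  obtain n where p: "p = Suc n" using assms(2) by (cases p) auto
  have "block_walk L E \<pi> \<phi> (Phi p \<pi> \<phi>)"
    using block_walk_Phi[OF blocks(1) _ hom] blocks(2) p by simp
  moreover have "\<Union>\<pi> = {1..2*p}" using partition unfolding pair_partition_def by simp
  ultimately show ?thesis
    using block_walk_closed_paths blocks(1) hom assms(2) unfolding graph_hom_def by blast
qed

end
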